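(* Let $u\in\mathrm{BMO}(\mathbb R)$ be complex-valued and let $\varphi:\mathbb R\to\mathbb C$ satisfy $|\varphi(x)|\le Ce^{-|x|}$ for some $C>0$. If $\|u\|_*<C_{JN}$, then there is a constant $C(u)$, given in terms of $\|u\|_*$ (and $C$), such that for all $x\in\mathbb R$, $y>0$, $$\int_{\mathbb R}|\varphi_y(x-t)|\,e^{|u(t)-u_{I(x,y)}|}\,dt\le C(u).$$
   Context: $u_I=|I|^{-1}\int_Iu$, $\|u\|_*=\sup_I|I|^{-1}\int_I|u-u_I|$ over bounded intervals, $\mathrm{BMO}(\mathbb R)=\{\|u\|_*<\infty\}$. $C_0,C_{JN}>0$ are universal constants with $|I|^{-1}|\{t\in I:|u(t)-u_I|\ge\lambda\}|\le C_0\exp(-C_{JN}\lambda/\|u\|_* )$ for all $u\in\mathrm{BMO}$, bounded $I$, $\lambda>0$. $\varphi_y(x)=y^{-1}\varphi(x/y)$, $I(x,y)=(x-y,x+y)$. *)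

theory Defs
  imports "HOL-Analysis.Analysis"
begin

definition avg :: "(real \<Rightarrow> complex) \<Rightarrow> real \<Rightarrow> real \<Rightarrow> complex" where
  "avg u a b = (LINT t:{a<..<b}|lborel. u t) / complex_of_real (b - a)"

definition osc :: "(real \<Rightarrow> complex) \<Rightarrow> real \<Rightarrow> real \<Rightarrow> real" where
  "osc u a b = (LINT t:{a<..<b}|lborel. cmod (u t - avg u a b)) / (b - a)"

definition bmo :: "(real \<Rightarrow> complex) \<Rightarrow> bool" where
  "bmo u \<longleftrightarrow> (\<forall>a b. a < b \<longrightarrow> set_integrable lborel {a<..<b} u)
     \<and> bdd_above {osc u a b | a b. a < b}"

definition bmo_norm :: "(real \<Rightarrow> complex) \<Rightarrow> real" where
  "bmo_norm u = (SUP p\<in>{p. fst p < snd p}. osc u (fst p) (snd p))"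

end

theory Submission
  imports Defs
begin

text \<open>
  Split the line into the dyadic annuli around x. If 2^(k-1) y \<le> |x - t| < 2^k y, the kernel
  is at most C e^(1 - 2^(k-1)), and |u_I(x,2^k y) - u_I(x,y)| \<le> 2 k ||u||_*, because averages over
  nested intervals of comparable length differ by at most twice the BMO norm. Hence the integral is
  bounded by the sum over k of (C/y) e^(1 - 2^(k-1) + 2 k ||u||_*) times the integral of
  e^|u - u_I| over I = I(x, 2^k y). Summing the John--Nirenberg bound over the level sets
  {|u - u_I| \<ge> n}, the latter is at most e (C0 + 1) |I| \<Sum>n. q^n with q = e^(1 - CJN / ||u||_*),
  and q < 1 precisely because ||u||_* < CJN. Since |I| = 2^(k+1) y, the superexponential decay of
  the kernel makes the sum over k converge.
\<close>

lemma osc_le_bmo_norm: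
  assumes "bmo u" "a < b"
  shows "osc u a b \<le> bmo_norm u"
proof -
  have "{osc u a b | a b. a < b} = (\<lambda>p. osc u (fst p) (snd p)) ` {p. fst p < snd p}"
    by (auto simp: image_def)
  then have "bdd_above ((\<lambda>p. osc u (fst p) (snd p)) ` {p. fst p < snd p})"
    using assms(1) unfolding bmo_def by simp
  then show ?thesis
    unfolding bmo_norm_def using assms(2)
      cSUP_upper[of "(a, b)" "{p. fst p < snd p}" "\<lambda>p. osc u (fst p) (snd p)"]
    by simp
qed

lemma osc_nonneg: "a < b \<Longrightarrow> 0 \<le> osc u a b"
  unfolding osc_def set_lebesgue_integral_def
  by (intro divide_nonneg_nonneg integral_nonneg) auto

lemma bmo_norm_nonneg: "bmo u \<Longrightarrow> 0 \<le> bmo_norm u"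
  using osc_le_bmo_norm[of u 0 1] osc_nonneg[of 0 1 u] by simp

lemma set_integrable_const_Ioo: "set_integrable lborel {a<..<b::real} (\<lambda>_. c :: complex)"
  unfolding set_integrable_def
  by (cases "a \<le> b") auto

lemma bmo_set_integrable_norm_diff:
  assumes "bmo u" "a < b"
  shows "set_integrable lborel {a<..<b} (\<lambda>t. cmod (u t - c))"
  using assms unfolding bmo_def
  by (intro set_integrable_norm set_integral_diff set_integrable_const_Ioo) auto

lemma bmo_set_borel_measurable_norm_diff:
  assumes "bmo u" "a < b"
  shows "set_borel_measurable lborel {a<..<b} (\<lambda>t. cmod (u t - c))"
  using bmo_set_integrable_norm_diff[OF assms]
  unfolding set_integrable_def set_borel_measurable_def by (rule borel_measurable_integrable)

lemma avg_minus_const: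
  assumes "set_integrable lborel {a<..<b} u" "a < b"
  shows "avg u a b - c = avg (\<lambda>t. u t - c) a b"
  using assms unfolding avg_def
  by (simp add: set_integrable_const_Ioo set_integral_const field_simps scaleR_conv_of_real)

lemma norm_avg_le:
  assumes "set_integrable lborel {a<..<b} u" "a < b"
  shows "cmod (avg u a b) \<le> (LINT t:{a<..<b}|lborel. cmod (u t)) / (b - a)"
  using assms set_integral_norm_bound[OF assms(1)] unfolding avg_def
  by (simp add: norm_divide divide_right_mono flip: of_real_diff)

lemma norm_avg_sub_avg_le:
  assumes u: "bmo u" and sub: "a \<le> a'" "a' < b'" "b' \<le> b"
  shows "cmod (avg u a' b' - avg u a b) \<le> (b - a) / (b' - a') * bmo_norm u"
proof -
  let ?c = "avg u a b" and ?v = "\<lambda>t. u t - avg u a b"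
  have ab: "a < b" using sub by simp
  have iv: "set_integrable lborel {a'<..<b'} ?v"
    using u sub unfolding bmo_def by (intro set_integral_diff set_integrable_const_Ioo) auto
  have "cmod (avg u a' b' - ?c) \<le> (LINT t:{a'<..<b'}|lborel. cmod (?v t)) / (b' - a')"
    using u sub iv unfolding bmo_def by (simp add: avg_minus_const norm_avg_le)
  also have "\<dots> \<le> (LINT t:{a<..<b}|lborel. cmod (?v t)) / (b' - a')"
  proof (intro divide_right_mono)
    have "set_integrable lborel {a'<..<b'} (\<lambda>t. cmod (?v t))"
      "set_integrable lborel {a<..<b} (\<lambda>t. cmod (?v t))"
      using bmo_set_integrable_norm_diff[OF u] sub by auto
    then show "(LINT t:{a'<..<b'}|lborel. cmod (?v t)) \<le> (LINT t:{a<..<b}|lborel. cmod (?v t))"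
      using sub unfolding set_lebesgue_integral_def set_integrable_def
      by (intro integral_mono) (auto split: split_indicator)
  qed (use sub in simp)
  also have "\<dots> = (b - a) / (b' - a') * osc u a b"
    using ab by (simp add: osc_def)
  also have "\<dots> \<le> (b - a) / (b' - a') * bmo_norm u"
    using sub by (intro mult_left_mono osc_le_bmo_norm[OF u ab]) auto
  finally show ?thesis .
qed

lemma norm_avg_dyadic_sub_avg_le:
  assumes u: "bmo u" and y: "0 < y"
  shows "cmod (avg u (x - 2 ^ k * y) (x + 2 ^ k * y) - avg u (x - y) (x + y)) \<le> 2 * real k * bmo_norm u"
proof (induction k)
  case (Suc k)
  let ?A = "\<lambda>k. avg u (x - 2 ^ k * y) (x + 2 ^ k * y)"
  have "cmod (?A k - ?A (Suc k)) \<le> 2 * bmo_norm u"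
    using norm_avg_sub_avg_le[OF u, of "x - 2 ^ Suc k * y" "x - 2 ^ k * y" "x + 2 ^ k * y" "x + 2 ^ Suc k * y"] y
    by simp
  then show ?case
    using Suc norm_triangle_ineq[of "?A (Suc k) - ?A k" "?A k - ?A 0"]
    by (simp add: norm_minus_commute algebra_simps)
qed simp

lemma measure_superlevel_osc_le:
  assumes u: "bmo u" and ab: "a < b" and lam: "0 < lam"
  shows "measure lborel {t \<in> {a<..<b}. lam \<le> cmod (u t - avg u a b)} \<le> (b - a) * osc u a b / lam"
proof -
  let ?g = "\<lambda>t. indicator {a<..<b} t * cmod (u t - avg u a b)"
  have "integrable lborel ?g"
    using bmo_set_integrable_norm_diff[OF u ab] by (simp add: set_integrable_def)
  then have "measure lborel {t \<in> space lborel. lam \<le> ?g t} \<le> (\<integral>t. ?g t \<partial>lborel) / lam"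
    using lam by (intro integral_Markov_inequality_measure[where A = "{}"]) auto
  moreover have "{t \<in> space lborel. lam \<le> ?g t} = {t \<in> {a<..<b}. lam \<le> cmod (u t - avg u a b)}"
    using lam by (auto simp: indicator_def)
  ultimately show ?thesis
    using ab by (simp add: osc_def set_lebesgue_integral_def)
qed

definition john_nirenberg_ineq :: "real \<Rightarrow> real \<Rightarrow> bool" where
  "john_nirenberg_ineq C0 CJN \<longleftrightarrow>
    (\<forall>(u::real \<Rightarrow> complex) a b lam. bmo u \<and> a < b \<and> lam > 0 \<longrightarrow>
       measure lborel {t \<in> {a<..<b}. cmod (u t - avg u a b) \<ge> lam} / (b - a)
         \<le> C0 * exp (- CJN * lam / bmo_norm u))"

(* At N = 0 the ratio is its limit as N tends to 0 from above; the formula itself would give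
   exp 1 there, since CJN / 0 = 0. *)
definition jn_decay_ratio :: "real \<Rightarrow> real \<Rightarrow> real" where
  "jn_decay_ratio CJN N = (if N = 0 then 0 else exp (1 - CJN / N))"

definition jn_exp_constant :: "real \<Rightarrow> real \<Rightarrow> real \<Rightarrow> real" where
  "jn_exp_constant C0 CJN N = exp 1 * (C0 + 1) / (1 - jn_decay_ratio CJN N)"

lemma jn_decay_ratio_bounds:
  assumes "0 \<le> N" "N < CJN"
  shows "0 \<le> jn_decay_ratio CJN N" "jn_decay_ratio CJN N < 1"
  using assms by (auto simp: jn_decay_ratio_def)

lemma jn_exp_constant_nonneg:
  assumes "0 \<le> C0" "0 \<le> N" "N < CJN"
  shows "0 \<le> jn_exp_constant C0 CJN N"
  using jn_decay_ratio_bounds[OF assms(2,3)] assms(1) by (simp add: jn_exp_constant_def)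

lemma exp_mult_measure_superlevel_le:
  assumes JN: "john_nirenberg_ineq C0 CJN" and C0: "0 \<le> C0" and u: "bmo u" and ab: "a < b"
  shows "exp (real n) * measure lborel {t \<in> {a<..<b}. real n \<le> cmod (u t - avg u a b)}
    \<le> (C0 + 1) * (b - a) * jn_decay_ratio CJN (bmo_norm u) ^ n"
proof -
  let ?S = "{t \<in> {a<..<b}. real n \<le> cmod (u t - avg u a b)}" and ?N = "bmo_norm u"
  consider "n = 0" | "0 < n" "?N = 0" | "0 < n" "0 < ?N"
    using bmo_norm_nonneg[OF u] by linarith
  then show ?thesis
  proof cases
    case 1
    then have "?S = {a<..<b}" by auto
    then show ?thesis
      using 1 ab C0 by simp
  next
    case 2
    \<comment> \<open>Here JN gives nothing, as exp (- CJN * n / 0) = 1; use Chebyshev instead.\<close>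
    have "measure lborel ?S \<le> (b - a) * osc u a b / real n"
      using 2 by (intro measure_superlevel_osc_le[OF u ab]) simp
    also have "\<dots> \<le> 0"
      using 2 ab osc_le_bmo_norm[OF u ab] osc_nonneg[OF ab, of u] by simp
    finally have "measure lborel ?S = 0"
      using measure_nonneg[of lborel ?S] by linarith
    then show ?thesis
      using 2 by (simp add: jn_decay_ratio_def zero_power)
  next
    case 3
    have "0 < real n" using 3 by simp
    then have "measure lborel ?S / (b - a) \<le> C0 * exp (- CJN * real n / ?N)"
      using JN u ab unfolding john_nirenberg_ineq_def by blast
    then have "measure lborel ?S \<le> (b - a) * (C0 * exp (- CJN * real n / ?N))"
      using ab by (simp add: pos_divide_le_eq mult.commute)
    then have "exp (real n) * measure lborel ?S \<le> exp (real n) * ((b - a) * (C0 * exp (- CJN * real n / ?N)))"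
      by (rule mult_left_mono) simp
    also have "\<dots> = C0 * (b - a) * (exp (real n) * exp (- CJN * real n / ?N))"
      by (simp add: algebra_simps)
    also have "exp (real n) * exp (- CJN * real n / ?N) = jn_decay_ratio CJN ?N ^ n"
      using 3 by (simp add: jn_decay_ratio_def field_simps flip: exp_add exp_of_nat_mult)
    also have "C0 * (b - a) * jn_decay_ratio CJN ?N ^ n \<le> (C0 + 1) * (b - a) * jn_decay_ratio CJN ?N ^ n"
      using ab by (intro mult_right_mono) (auto simp: jn_decay_ratio_def)
    finally show ?thesis .
  qed
qed

lemma ennreal_le_suminf: "f m \<le> (\<Sum>n. f n :: ennreal)"
  using sum_le_suminf[OF summableI, of "{m}" f] by simp

lemma nn_integral_exp_le_suminf_superlevel:
  fixes g :: "'a \<Rightarrow> real"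
  assumes g: "set_borel_measurable M A g" and A: "A \<in> sets M"
    and nonneg: "\<And>t. t \<in> A \<Longrightarrow> 0 \<le> g t"
  shows "(\<integral>\<^sup>+t. ennreal (exp (g t) * indicator A t) \<partial>M)
    \<le> (\<Sum>n. ennreal (exp (real n + 1)) * emeasure M {t \<in> A. real n \<le> g t})"
proof -
  define S where "S n = {t \<in> A. real n \<le> g t}" for n :: nat
  have S: "S n \<in> sets M" for n
  proof -
    have "g -` {real n..} \<inter> A \<in> sets M"
      by (rule set_borel_measurable_sets[OF g _ A]) simp
    moreover have "g -` {real n..} \<inter> A = S n"
      by (auto simp: S_def)
    ultimately show ?thesis by simp
  qed
  have pointwise: "ennreal (exp (g t) * indicator A t)
      \<le> (\<Sum>n. ennreal (exp (real n + 1)) * indicator (S n) t)" for t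
  proof (cases "t \<in> A")
    case True
    define m where "m = nat \<lfloor>g t\<rfloor>"
    have "real m \<le> g t" "g t \<le> real m + 1"
      using nonneg[OF True] by (simp_all add: m_def of_nat_nat)
    then have "ennreal (exp (g t) * indicator A t) \<le> ennreal (exp (real m + 1)) * indicator (S m) t"
      using True by (simp add: S_def)
    also have "\<dots> \<le> (\<Sum>n. ennreal (exp (real n + 1)) * indicator (S n) t)"
      by (rule ennreal_le_suminf)
    finally show ?thesis .
  qed simp
  have "(\<integral>\<^sup>+t. ennreal (exp (g t) * indicator A t) \<partial>M)
      \<le> (\<integral>\<^sup>+t. (\<Sum>n. ennreal (exp (real n + 1)) * indicator (S n) t) \<partial>M)"
    by (intro nn_integral_mono pointwise)
  also have "\<dots> = (\<Sum>n. \<integral>\<^sup>+t. ennreal (exp (real n + 1)) * indicator (S n) t \<partial>M)"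
    using S by (intro nn_integral_suminf) simp
  also have "\<dots> = (\<Sum>n. ennreal (exp (real n + 1)) * emeasure M (S n))"
    using S by (simp add: nn_integral_cmult_indicator)
  finally show ?thesis by (simp add: S_def)
qed

lemma borel_measurable_exp_indicator:
  fixes g :: "'a \<Rightarrow> real"
  assumes "set_borel_measurable M A g" "A \<in> sets M"
  shows "(\<lambda>t. exp (g t) * indicator A t) \<in> borel_measurable M"
proof -
  note [measurable] = assms[unfolded set_borel_measurable_def]
  have "(\<lambda>t. exp (indicator A t *\<^sub>R g t) * indicator A t) \<in> borel_measurable M"
    by measurable
  also have "(\<lambda>t. exp (indicator A t *\<^sub>R g t) * indicator A t) = (\<lambda>t. exp (g t) * indicator A t)"
    by (auto simp: indicator_def)
  finally show ?thesis .
qed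

lemma nn_integral_exp_osc_le:
  assumes JN: "john_nirenberg_ineq C0 CJN" and C0: "0 \<le> C0"
    and u: "bmo u" "bmo_norm u < CJN" and ab: "a < b"
  shows "(\<integral>\<^sup>+ t. ennreal (exp (cmod (u t - avg u a b)) * indicator {a<..<b} t) \<partial>lborel)
    \<le> ennreal (jn_exp_constant C0 CJN (bmo_norm u) * (b - a))"
proof -
  let ?S = "\<lambda>n. {t \<in> {a<..<b}. real n \<le> cmod (u t - avg u a b)}"
  let ?q = "jn_decay_ratio CJN (bmo_norm u)"
  let ?y = "\<lambda>n. exp 1 * (C0 + 1) * (b - a) * ?q ^ n"
  have q: "0 \<le> ?q" "?q < 1"
    using jn_decay_ratio_bounds[OF bmo_norm_nonneg[OF u(1)] u(2)] by auto
  have level_bound: "ennreal (exp (real n + 1)) * emeasure lborel (?S n) \<le> ennreal (?y n)" for n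
  proof -
    have "emeasure lborel (?S n) \<le> emeasure lborel {a<..<b}"
      by (intro emeasure_mono) auto
    then have "emeasure lborel (?S n) = ennreal (measure lborel (?S n))"
      using ab by (intro emeasure_eq_ennreal_measure) (auto simp: top_unique)
    moreover have "exp (real n + 1) * measure lborel (?S n) \<le> ?y n"
      using exp_mult_measure_superlevel_le[OF JN C0 u(1) ab, of n]
      by (simp add: exp_add mult.assoc mult_left_mono)
    ultimately show ?thesis
      by (simp add: ennreal_leI flip: ennreal_mult)
  qed
  have "(\<integral>\<^sup>+ t. ennreal (exp (cmod (u t - avg u a b)) * indicator {a<..<b} t) \<partial>lborel)
      \<le> (\<Sum>n. ennreal (exp (real n + 1)) * emeasure lborel (?S n))"
    using bmo_set_borel_measurable_norm_diff[OF u(1) ab]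
    by (intro nn_integral_exp_le_suminf_superlevel) auto
  also have "\<dots> \<le> (\<Sum>n. ennreal (?y n))"
    by (intro suminf_le level_bound) auto
  also have "\<dots> = ennreal (\<Sum>n. ?y n)"
    using q C0 ab by (intro suminf_ennreal2 summable_mult summable_geometric) auto
  also have "(\<Sum>n. ?y n) = jn_exp_constant C0 CJN (bmo_norm u) * (b - a)"
    using q by (simp add: suminf_mult summable_geometric suminf_geometric jn_exp_constant_def)
  finally show ?thesis .
qed

definition dyadic_kernel_weight :: "real \<Rightarrow> nat \<Rightarrow> real" where
  "dyadic_kernel_weight N k = 2 ^ k * exp (1 - 2 ^ k / 2 + 2 * real k * N)"

lemma dyadic_kernel_weight_nonneg: "0 \<le> dyadic_kernel_weight N k"
  by (simp add: dyadic_kernel_weight_def)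

lemma dyadic_kernel_weight_Suc:
  "dyadic_kernel_weight N (Suc k) = 2 * exp (2 * N - 2 ^ k / 2) * dyadic_kernel_weight N k"
proof -
  have "1 - 2 ^ Suc k / 2 + 2 * real (Suc k) * N = (2 * N - 2 ^ k / 2) + (1 - 2 ^ k / 2 + 2 * real k * N)"
    by (simp add: algebra_simps)
  then have "exp (1 - 2 ^ Suc k / 2 + 2 * real (Suc k) * N)
      = exp (2 * N - 2 ^ k / 2) * exp (1 - 2 ^ k / 2 + 2 * real k * N)"
    by (simp only: exp_add)
  then show ?thesis
    by (simp add: dyadic_kernel_weight_def)
qed

lemma summable_dyadic_kernel_weight: "summable (dyadic_kernel_weight N)"
proof (rule summable_ratio_test[of "1 / 2" "nat \<lceil>4 * \<bar>N\<bar> + 8\<rceil>"])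
  fix k assume k: "nat \<lceil>4 * \<bar>N\<bar> + 8\<rceil> \<le> k"
  have "real k < 2 ^ k"
    using of_nat_less_iff[THEN iffD2, OF less_exp[of k]] by simp
  then have "2 * N - 2 ^ k / 2 \<le> -4"
    using k by linarith
  then have "exp (2 * N - 2 ^ k / 2) \<le> exp (-4)"
    by simp
  also have "\<dots> \<le> 1 / 5"
    using exp_ge_add_one_self[of 4] by (simp add: exp_minus field_simps)
  finally have ratio: "2 * exp (2 * N - 2 ^ k / 2) \<le> 1 / 2"
    by simp
  show "norm (dyadic_kernel_weight N (Suc k)) \<le> 1 / 2 * norm (dyadic_kernel_weight N k)"
    using mult_right_mono[OF ratio dyadic_kernel_weight_nonneg[of N k]] dyadic_kernel_weight_nonneg[of N k]
    by (simp add: dyadic_kernel_weight_Suc)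
qed simp

lemma exists_dyadic_scale:
  fixes d y :: real
  assumes "0 \<le> d" "0 < y"
  shows "\<exists>k::nat. d < 2 ^ k * y \<and> 2 ^ k * y \<le> 2 * (d + y)"
proof -
  have ex: "\<exists>k::nat. d < 2 ^ k * y"
    using real_arch_pow[of 2 "d / y"] assms by (auto simp: field_simps)
  define k where "k = (LEAST k::nat. d < 2 ^ k * y)"
  have "d < 2 ^ k * y"
    unfolding k_def by (rule LeastI_ex[OF ex])
  moreover have "2 ^ k * y \<le> 2 * (d + y)"
  proof (cases k)
    case (Suc j)
    then have "\<not> d < 2 ^ j * y"
      using not_less_Least[of j "\<lambda>k. d < 2 ^ k * y"] by (simp add: k_def)
    then show ?thesis
      using Suc assms by simp
  qed (use assms in simp)
  ultimately show ?thesis by blast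
qed

(* Majorant on the k-th scale: the kernel bound on the annulus 2^(k-1) y \<le> |x - t| < 2^k y,
   times the factor exp (2 k ||u||_* ) paid for replacing u_I(x,y) by u_I(x,2^k y). *)
definition dyadic_majorant ::
    "(real \<Rightarrow> complex) \<Rightarrow> real \<Rightarrow> real \<Rightarrow> real \<Rightarrow> nat \<Rightarrow> real \<Rightarrow> real" where
  "dyadic_majorant u C x y k t = C / y * exp (1 - 2 ^ k / 2 + 2 * real k * bmo_norm u)
    * (exp (cmod (u t - avg u (x - 2 ^ k * y) (x + 2 ^ k * y))) * indicator {x - 2 ^ k * y<..<x + 2 ^ k * y} t)"

lemma kernel_exp_osc_le_dyadic_majorant:
  assumes u: "bmo u" and \<phi>: "\<And>x. cmod (\<phi> x) \<le> C * exp (- \<bar>x\<bar>)" and y: "0 < y"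
  shows "\<exists>k. cmod (\<phi> ((x - t) / y)) / y * exp (cmod (u t - avg u (x - y) (x + y)))
    \<le> dyadic_majorant u C x y k t"
proof -
  obtain k :: nat where k: "\<bar>x - t\<bar> < 2 ^ k * y" "2 ^ k * y \<le> 2 * (\<bar>x - t\<bar> + y)"
    using exists_dyadic_scale[of "\<bar>x - t\<bar>" y] y by auto
  let ?A = "\<lambda>k. avg u (x - 2 ^ k * y) (x + 2 ^ k * y)"
  have C: "0 \<le> C"
    using order_trans[OF norm_ge_zero \<phi>[of 0]] by simp
  have kernel: "cmod (\<phi> ((x - t) / y)) \<le> C * exp (1 - 2 ^ k / 2)"
  proof -
    have "- \<bar>(x - t) / y\<bar> \<le> 1 - 2 ^ k / 2"
      using k y by (simp add: abs_divide field_simps)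
    then have "C * exp (- \<bar>(x - t) / y\<bar>) \<le> C * exp (1 - 2 ^ k / 2)"
      using C by (intro mult_left_mono) simp_all
    then show ?thesis
      using \<phi>[of "(x - t) / y"] by linarith
  qed
  have osc: "cmod (u t - ?A 0) \<le> cmod (u t - ?A k) + 2 * real k * bmo_norm u"
    using norm_triangle_ineq[of "u t - ?A k" "?A k - ?A 0"] norm_avg_dyadic_sub_avg_le[OF u y, of x k]
    by simp
  have "cmod (\<phi> ((x - t) / y)) / y * exp (cmod (u t - ?A 0))
      \<le> C * exp (1 - 2 ^ k / 2) / y * exp (cmod (u t - ?A k) + 2 * real k * bmo_norm u)"
    using kernel osc y C by (intro mult_mono divide_right_mono) simp_all
  also have "\<dots> = dyadic_majorant u C x y k t"
    using k by (simp add: dyadic_majorant_def exp_add abs_less_iff)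
  finally show ?thesis
    by (intro exI[of _ k]) simp
qed

lemma borel_measurable_dyadic_majorant:
  assumes u: "bmo u" and y: "0 < y"
  shows "(\<lambda>t. ennreal (dyadic_majorant u C x y k t)) \<in> borel_measurable lborel"
proof -
  have [measurable]: "(\<lambda>t. exp (cmod (u t - avg u (x - 2 ^ k * y) (x + 2 ^ k * y)))
      * indicator {x - 2 ^ k * y<..<x + 2 ^ k * y} t) \<in> borel_measurable lborel"
    using y by (intro borel_measurable_exp_indicator bmo_set_borel_measurable_norm_diff u) auto
  show ?thesis
    unfolding dyadic_majorant_def by measurable
qed

lemma nn_integral_dyadic_majorant_le:
  assumes JN: "john_nirenberg_ineq C0 CJN" and C0: "0 \<le> C0"
    and u: "bmo u" "bmo_norm u < CJN" and C: "0 \<le> C" and y: "0 < y"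
  shows "(\<integral>\<^sup>+ t. ennreal (dyadic_majorant u C x y k t) \<partial>lborel)
    \<le> ennreal (2 * C * jn_exp_constant C0 CJN (bmo_norm u) * dyadic_kernel_weight (bmo_norm u) k)"
proof -
  let ?A = "jn_exp_constant C0 CJN (bmo_norm u)" and ?r = "2 ^ k * y"
    and ?c = "C / y * exp (1 - 2 ^ k / 2 + 2 * real k * bmo_norm u)"
  have c: "0 \<le> ?c"
    using C y by simp
  have "(\<integral>\<^sup>+ t. ennreal (dyadic_majorant u C x y k t) \<partial>lborel)
      = ennreal ?c * (\<integral>\<^sup>+ t. ennreal (exp (cmod (u t - avg u (x - ?r) (x + ?r)))
          * indicator {x - ?r<..<x + ?r} t) \<partial>lborel)"
    using c y unfolding dyadic_majorant_def ennreal_mult'[OF c]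
    by (intro nn_integral_cmult measurable_compose[OF _ measurable_ennreal] borel_measurable_exp_indicator
        bmo_set_borel_measurable_norm_diff u) auto
  also have "\<dots> \<le> ennreal ?c * ennreal (?A * ((x + ?r) - (x - ?r)))"
    using y by (intro mult_left_mono nn_integral_exp_osc_le[OF JN C0 u]) auto
  also have "\<dots> = ennreal (?c * (?A * ((x + ?r) - (x - ?r))))"
    by (rule ennreal_mult'[OF c, symmetric])
  also have "?c * (?A * ((x + ?r) - (x - ?r))) = 2 * C * ?A * dyadic_kernel_weight (bmo_norm u) k"
    using y by (simp add: dyadic_kernel_weight_def field_simps)
  finally show ?thesis .
qed

lemma nn_integral_kernel_exp_osc_le:
  assumes JN: "john_nirenberg_ineq C0 CJN" and C0: "0 \<le> C0"
    and u: "bmo u" "bmo_norm u < CJN"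
    and \<phi>: "\<And>x. cmod (\<phi> x) \<le> C * exp (- \<bar>x\<bar>)" and y: "0 < y"
  shows "(\<integral>\<^sup>+ t. ennreal (cmod (\<phi> ((x - t) / y)) / y * exp (cmod (u t - avg u (x - y) (x + y)))) \<partial>lborel)
    \<le> ennreal (2 * C * jn_exp_constant C0 CJN (bmo_norm u) * suminf (dyadic_kernel_weight (bmo_norm u)))"
proof -
  let ?N = "bmo_norm u" and ?A = "jn_exp_constant C0 CJN (bmo_norm u)"
  have C: "0 \<le> C"
    using order_trans[OF norm_ge_zero \<phi>[of 0]] by simp
  have "(\<integral>\<^sup>+ t. ennreal (cmod (\<phi> ((x - t) / y)) / y * exp (cmod (u t - avg u (x - y) (x + y)))) \<partial>lborel)
      \<le> (\<integral>\<^sup>+ t. (\<Sum>k. ennreal (dyadic_majorant u C x y k t)) \<partial>lborel)"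
  proof (rule nn_integral_mono)
    fix t
    obtain k where "cmod (\<phi> ((x - t) / y)) / y * exp (cmod (u t - avg u (x - y) (x + y)))
        \<le> dyadic_majorant u C x y k t"
      using kernel_exp_osc_le_dyadic_majorant[OF u(1) \<phi> y] by blast
    then have "ennreal (cmod (\<phi> ((x - t) / y)) / y * exp (cmod (u t - avg u (x - y) (x + y))))
        \<le> ennreal (dyadic_majorant u C x y k t)"
      by (rule ennreal_leI)
    also have "\<dots> \<le> (\<Sum>k. ennreal (dyadic_majorant u C x y k t))"
      by (rule ennreal_le_suminf)
    finally show "ennreal (cmod (\<phi> ((x - t) / y)) / y * exp (cmod (u t - avg u (x - y) (x + y))))
        \<le> (\<Sum>k. ennreal (dyadic_majorant u C x y k t))" .
  qed
  also have "\<dots> = (\<Sum>k. \<integral>\<^sup>+ t. ennreal (dyadic_majorant u C x y k t) \<partial>lborel)"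
    using borel_measurable_dyadic_majorant[OF u(1) y] by (intro nn_integral_suminf)
  also have "\<dots> \<le> (\<Sum>k. ennreal (2 * C * ?A * dyadic_kernel_weight ?N k))"
    using nn_integral_dyadic_majorant_le[OF JN C0 u C y] by (intro suminf_le) auto
  also have "\<dots> = ennreal (\<Sum>k. 2 * C * ?A * dyadic_kernel_weight ?N k)"
    using C jn_exp_constant_nonneg[OF C0 bmo_norm_nonneg[OF u(1)] u(2)] dyadic_kernel_weight_nonneg
    by (intro suminf_ennreal2 summable_mult summable_dyadic_kernel_weight) auto
  also have "(\<Sum>k. 2 * C * ?A * dyadic_kernel_weight ?N k) = 2 * C * ?A * suminf (dyadic_kernel_weight ?N)"
    by (intro suminf_mult summable_dyadic_kernel_weight)
  finally show ?thesis .
qed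

theorem proposition2p5:
  fixes C0 CJN :: real
  assumes "C0 > 0" and "CJN > 0"
    and JN: "\<forall>(u::real \<Rightarrow> complex) a b lam. bmo u \<and> a < b \<and> lam > 0 \<longrightarrow>
       measure lborel {t \<in> {a<..<b}. cmod (u t - avg u a b) \<ge> lam} / (b - a)
         \<le> C0 * exp (- CJN * lam / bmo_norm u)"
  shows "\<exists>K :: real \<Rightarrow> real \<Rightarrow> real.
    \<forall>(u::real \<Rightarrow> complex) (\<phi>::real \<Rightarrow> complex) C.
      bmo u \<and> C > 0 \<and> (\<forall>x. cmod (\<phi> x) \<le> C * exp (- \<bar>x\<bar>)) \<and> bmo_norm u < CJN \<longrightarrow>
      (\<forall>x y. y > 0 \<longrightarrow>
        (\<integral>\<^sup>+ t. ennreal (cmod (\<phi> ((x - t) / y)) / y * exp (cmod (u t - avg u (x - y) (x + y)))) \<partial>lborel)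
          \<le> ennreal (K (bmo_norm u) C))"
proof (rule exI[of _ "\<lambda>N C. 2 * C * jn_exp_constant C0 CJN N * suminf (dyadic_kernel_weight N)"],
    intro allI impI)
  fix u :: "real \<Rightarrow> complex" and \<phi> :: "real \<Rightarrow> complex" and C x y :: real
  assume "bmo u \<and> C > 0 \<and> (\<forall>x. cmod (\<phi> x) \<le> C * exp (- \<bar>x\<bar>)) \<and> bmo_norm u < CJN" and "y > 0"
  moreover have "john_nirenberg_ineq C0 CJN"
    using JN unfolding john_nirenberg_ineq_def .
  ultimately show "(\<integral>\<^sup>+ t. ennreal (cmod (\<phi> ((x - t) / y)) / y * exp (cmod (u t - avg u (x - y) (x + y)))) \<partial>lborel)
      \<le> ennreal (2 * C * jn_exp_constant C0 CJN (bmo_norm u) * suminf (dyadic_kernel_weight (bmo_norm u)))"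
    using \<open>C0 > 0\<close> by (intro nn_integral_kernel_exp_osc_le) auto
qed

end
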